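(* For every proper caterpillar $T$ and every $\beta\in\Phi(T)$, \[U^L_T(\mathbf{x})=\mathcal{L}(\beta,\mathbf{x}).\]
   Context: Let $\mathbf{x}=x_1,x_2,\ldots$ be commuting indeterminates; for a partition $\lambda=\lambda_1\cdots\lambda_l$ put $\mathbf{x}_\lambda=x_{\lambda_1}\cdots x_{\lambda_l}$. A composition is a finite nonempty sequence of positive integers; the type $\lambda(\alpha)$ of a composition $\alpha$ is the partition obtained by sorting its parts in weakly decreasing order. A composition $\alpha$ is a coarsening of $\beta$, written $\alpha\succeq\beta$, if $\alpha$ is obtained from $\beta$ by summing blocks of consecutive parts (i.e. there are indices $1=j_0<j_1<\cdots<j_{i+1}=\ell(\beta)+1$ with $\alpha_r=\beta_{j_{r-1}}+\cdots+\beta_{j_r-1}$). The $\mathcal{L}$-polynomial is $\mathcal{L}(\beta,\mathbf{x})=\sum_{\alpha\succeq\beta}\mathbf{x}_{\lambda(\alpha)}$. A caterpillar is a tree in which the internal (non-leaf) vertices induce a non-trivial path (the spine), with $L(T)$ the set of non-spine edges; it is proper if every internal vertex is adjacent to a leaf. For $A\subseteq E(T)$, $\lambda(A)$ is the partition formed by the sizes of the components of $(V(T),A)$, and $U^L_T(\mathbf{x})=\sum_{A\subseteq E(T),\,L(T)\subseteq A}\mathbf{x}_{\lambda(A)}$. For a proper caterpillar with spine $v_1\cdots v_k$, let $\beta_i$ be the number of vertices of the component of $(V(T),L(T))$ containing $v_i$, and $\Phi(T)=\{\beta_1\cdots\beta_k,\ \beta_k\cdots\beta_1\}$. *)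

theory Defs
  imports Main "HOL-Library.Multiset"
begin

definition simple_graph :: "'v set \<Rightarrow> 'v set set \<Rightarrow> bool" where
  "simple_graph V E \<longleftrightarrow> finite V \<and>
     (\<forall>e\<in>E. \<exists>u v. u \<noteq> v \<and> u \<in> V \<and> v \<in> V \<and> e = {u, v})"

definition adj_rel :: "'v set set \<Rightarrow> ('v \<times> 'v) set" where
  "adj_rel A = {(a, b). {a, b} \<in> A}"

definition component :: "'v set \<Rightarrow> 'v set set \<Rightarrow> 'v \<Rightarrow> 'v set" where
  "component V A v = {u \<in> V. (v, u) \<in> (adj_rel A)\<^sup>*}"

definition components :: "'v set \<Rightarrow> 'v set set \<Rightarrow> 'v set set" where
  "components V A = component V A ` V"

definition connected_graph :: "'v set \<Rightarrow> 'v set set \<Rightarrow> bool" where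
  "connected_graph V E \<longleftrightarrow> V \<noteq> {} \<and> (\<forall>u\<in>V. \<forall>v\<in>V. (u, v) \<in> (adj_rel E)\<^sup>*)"

definition is_cycle :: "'v set set \<Rightarrow> 'v list \<Rightarrow> bool" where
  "is_cycle E cs \<longleftrightarrow> length cs \<ge> 3 \<and> distinct cs \<and>
     (\<forall>i. Suc i < length cs \<longrightarrow> {cs ! i, cs ! Suc i} \<in> E) \<and> {last cs, hd cs} \<in> E"

definition acyclic_graph :: "'v set set \<Rightarrow> bool" where
  "acyclic_graph E \<longleftrightarrow> \<not> (\<exists>cs. is_cycle E cs)"

definition is_tree :: "'v set \<Rightarrow> 'v set set \<Rightarrow> bool" where
  "is_tree V E \<longleftrightarrow> simple_graph V E \<and> connected_graph V E \<and> acyclic_graph E"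

definition degree :: "'v set set \<Rightarrow> 'v \<Rightarrow> nat" where
  "degree E v = card {e \<in> E. v \<in> e}"

definition is_leaf :: "'v set set \<Rightarrow> 'v \<Rightarrow> bool" where
  "is_leaf E v \<longleftrightarrow> degree E v = 1"

definition internal :: "'v set \<Rightarrow> 'v set set \<Rightarrow> 'v set" where
  "internal V E = {v \<in> V. \<not> is_leaf E v}"

definition is_spine :: "'v set \<Rightarrow> 'v set set \<Rightarrow> 'v list \<Rightarrow> bool" where
  "is_spine V E vs \<longleftrightarrow> length vs \<ge> 2 \<and> distinct vs \<and> set vs = internal V E \<and>
     {e \<in> E. e \<subseteq> set vs} = {{vs ! i, vs ! Suc i} | i. Suc i < length vs}"

definition caterpillar :: "'v set \<Rightarrow> 'v set set \<Rightarrow> bool" where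
  "caterpillar V E \<longleftrightarrow> is_tree V E \<and> (\<exists>vs. is_spine V E vs)"

definition proper_caterpillar :: "'v set \<Rightarrow> 'v set set \<Rightarrow> bool" where
  "proper_caterpillar V E \<longleftrightarrow> caterpillar V E \<and>
     (\<forall>v \<in> internal V E. \<exists>u. is_leaf E u \<and> {u, v} \<in> E)"

text \<open>\<open>L(T)\<close>: the non-spine edges, i.e. edges not joining two internal vertices.\<close>
definition leaf_edges :: "'v set \<Rightarrow> 'v set set \<Rightarrow> 'v set set" where
  "leaf_edges V E = {e \<in> E. \<not> e \<subseteq> internal V E}"

text \<open>\<open>\<Phi>(T) = {\<beta>_1\<cdots>\<beta>_k, \<beta>_k\<cdots>\<beta>_1}\<close>; the spine is unique up to reversal, so this is
  the set of sequences obtained from all spine orderings.\<close>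
definition Phi :: "'v set \<Rightarrow> 'v set set \<Rightarrow> nat list set" where
  "Phi V E = {map (\<lambda>v. card (component V (leaf_edges V E) v)) vs | vs. is_spine V E vs}"

definition partition_of :: "'v set \<Rightarrow> 'v set set \<Rightarrow> nat multiset" where
  "partition_of V A = image_mset card (mset_set (components V A))"

definition xmon :: "(nat \<Rightarrow> 'a::comm_ring_1) \<Rightarrow> nat multiset \<Rightarrow> 'a" where
  "xmon x \<mu> = prod_mset (image_mset x \<mu>)"

definition U_L :: "'v set \<Rightarrow> 'v set set \<Rightarrow> (nat \<Rightarrow> 'a::comm_ring_1) \<Rightarrow> 'a" where
  "U_L V E x = (\<Sum>A \<in> {A. A \<subseteq> E \<and> leaf_edges V E \<subseteq> A}. xmon x (partition_of V A))"

definition composition :: "nat list \<Rightarrow> bool" where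
  "composition \<beta> \<longleftrightarrow> \<beta> \<noteq> [] \<and> (\<forall>b \<in> set \<beta>. 0 < b)"

definition coarsening :: "nat list \<Rightarrow> nat list \<Rightarrow> bool" where
  "coarsening \<alpha> \<beta> \<longleftrightarrow> (\<exists>bs. concat bs = \<beta> \<and> (\<forall>b \<in> set bs. b \<noteq> []) \<and> \<alpha> = map sum_list bs)"

text \<open>The type \<open>\<lambda>(\<alpha>)\<close> of a composition, as a multiset, is \<open>mset \<alpha>\<close>.\<close>
definition L_poly :: "nat list \<Rightarrow> (nat \<Rightarrow> 'a::comm_ring_1) \<Rightarrow> 'a" where
  "L_poly \<beta> x = (\<Sum>\<alpha> \<in> {\<alpha>. coarsening \<alpha> \<beta>}. xmon x (mset \<alpha>))"

end

theory Submission
  imports Defs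
begin

text \<open>
  An edge set \<open>A\<close> with \<open>L(T) \<subseteq> A \<subseteq> E(T)\<close> is \<open>L(T)\<close> together with an arbitrary
  choice of spine edges, i.e. a word of \<open>k - 1\<close> flags. The components of \<open>(V(T), L(T))\<close>
  are the stars of the spine vertices, of sizes \<open>\<beta>\<^sub>1, \<dots>, \<beta>\<^sub>k\<close>, and adding the
  flagged spine edges merges consecutive stars; so \<open>\<lambda>(A)\<close> is the type of the coarsening of
  \<open>\<beta>\<close> obtained by summing the parts joined by a flagged edge. Since the parts of \<open>\<beta>\<close>
  are positive, distinct flag words give distinct coarsenings, and every coarsening arises;
  hence both polynomials are the same sum over flag words.
\<close>

section \<open>Gluing adjacent list entries\<close>

text \<open>Flag \<open>i\<close> says whether the entry built so far is merged with the next one.\<close>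

fun glue :: "('a \<Rightarrow> 'a \<Rightarrow> 'a) \<Rightarrow> 'a list \<Rightarrow> bool list \<Rightarrow> 'a list" where
  "glue f (a # b # r) (True # js) = glue f (f a b # r) js"
| "glue f (a # b # r) (False # js) = a # glue f (b # r) js"
| "glue f xs js = xs"

lemma map_glue:
  "(\<And>a b. h (f a b) = g (h a) (h b)) \<Longrightarrow> map h (glue f xs js) = glue g (map h xs) js"
  by (induction f xs js rule: glue.induct) auto

lemma concat_glue_append: "concat (glue (@) xss js) = concat xss"
  by (induction "(@) :: 'a list \<Rightarrow> _" xss js rule: glue.induct) auto

lemma glue_append_nonempty: "[] \<notin> set xss \<Longrightarrow> [] \<notin> set (glue (@) xss js)"
  by (induction "(@) :: 'a list \<Rightarrow> _" xss js rule: glue.induct) auto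

lemma hd_glue_plus_ge: "glue (+) (a # r) js \<noteq> [] \<and> (a::nat) \<le> hd (glue (+) (a # r) js)"
  by (induction "(+) :: nat \<Rightarrow> _" "a # r" js arbitrary: a r rule: glue.induct) fastforce+

lemma glue_plus_eq_imp_flags_eq:
  assumes "\<forall>b\<in>set xs. (0::nat) < b"
    and "length js = length xs - 1" "length js' = length xs - 1"
    and "glue (+) xs js = glue (+) xs js'"
  shows "js = js'"
  using assms
proof (induction js arbitrary: xs js')
  case (Cons j js)
  obtain a b r where xs: "xs = a # b # r"
    using Cons.prems(2) by (cases xs; cases "tl xs") auto
  obtain j' js'' where js': "js' = j' # js''"
    using Cons.prems(3) Cons.prems(2) by (cases js') auto
  have "0 < b" using Cons.prems(1) xs by simp
  then have "glue (+) ((a + b) # r) ks \<noteq> a # glue (+) (b # r) ks'" for ks ks'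
    using hd_glue_plus_ge[of "a + b" r ks] by auto
  then show ?case
    using Cons.prems Cons.IH[of "(a + b) # r" js''] Cons.IH[of "b # r" js''] xs js'
    by (cases j; cases j') (auto dest: sym)
qed simp

fun cut_flags :: "'a list list \<Rightarrow> bool list" where
  "cut_flags [] = []"
| "cut_flags [b] = replicate (length b - 1) True"
| "cut_flags (b # c # bs) = replicate (length b - 1) True @ False # cut_flags (c # bs)"

lemma glue_append_replicate_True:
  "glue (@) (p # map (\<lambda>y. [y]) c @ r) (replicate (length c) True @ js) = glue (@) ((p @ c) # r) js"
  by (induction c arbitrary: p) auto

lemma glue_singletons_cut_flags:
  "[] \<notin> set bs \<Longrightarrow> glue (@) (map (\<lambda>y. [y]) (concat bs)) (cut_flags bs) = bs"
proof (induction bs rule: cut_flags.induct)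
  case (2 b)
  then obtain y b' where "b = y # b'" by (cases b) auto
  then show ?case using glue_append_replicate_True[of "[y]" b' "[]" "[]"] by simp
next
  case (3 b c bs)
  then obtain y b' where b: "b = y # b'" by (cases b) auto
  obtain z c' where "c = z # c'" using "3.prems" by (cases c) auto
  then show ?case
    using "3" b glue_append_replicate_True[of "[y]" b' "map (\<lambda>y. [y]) (concat (c # bs))"] by simp
qed simp

lemma length_cut_flags: "[] \<notin> set bs \<Longrightarrow> length (cut_flags bs) = length (concat bs) - 1"
proof (induction bs rule: cut_flags.induct)
  case (3 b c bs)
  then show ?case by (cases b) auto
qed auto

lemma sum_list_glue_singletons:
  "map sum_list (glue (@) (map (\<lambda>y. [y]) xs) js) = glue (+) (xs :: nat list) js"
  by (subst map_glue[where g = "(+)"]) (simp_all add: comp_def)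

lemma coarsenings_eq_glue:
  assumes "xs \<noteq> []"
  shows "{\<alpha>. coarsening \<alpha> xs} = glue (+) xs ` {js. length js = length xs - 1}"
proof (intro equalityI subsetI)
  fix \<alpha> assume "\<alpha> \<in> {\<alpha>. coarsening \<alpha> xs}"
  then obtain bs where bs: "concat bs = xs" "[] \<notin> set bs" "\<alpha> = map sum_list bs"
    unfolding coarsening_def by auto
  then have "\<alpha> = glue (+) xs (cut_flags bs)"
    using glue_singletons_cut_flags sum_list_glue_singletons by metis
  moreover have "length (cut_flags bs) = length xs - 1" using length_cut_flags bs by blast
  ultimately show "\<alpha> \<in> glue (+) xs ` {js. length js = length xs - 1}" by blast
next
  fix \<alpha> assume "\<alpha> \<in> glue (+) xs ` {js. length js = length xs - 1}"
  then obtain js where "\<alpha> = glue (+) xs js" by auto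
  then show "\<alpha> \<in> {\<alpha>. coarsening \<alpha> xs}"
    unfolding coarsening_def
    using sum_list_glue_singletons concat_glue_append[of "map (\<lambda>y. [y]) xs"]
      glue_append_nonempty[of "map (\<lambda>y. [y]) xs"]
    by fastforce
qed

lemma L_poly_eq_sum_flags:
  assumes "composition \<beta>"
  shows "L_poly \<beta> x = (\<Sum>js | length js = length \<beta> - 1. xmon x (mset (glue (+) \<beta> js)))"
proof -
  have "inj_on (glue (+) \<beta>) {js. length js = length \<beta> - 1}"
    using assms glue_plus_eq_imp_flags_eq by (auto simp: composition_def inj_on_def)
  then show ?thesis
    using assms by (simp add: L_poly_def coarsenings_eq_glue composition_def sum.reindex)
qed

section \<open>Components of graphs\<close>

lemma tree_simple_graph: "is_tree V E \<Longrightarrow> simple_graph V E"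
  by (simp add: is_tree_def)

lemma simple_graph_edge_ends:
  "simple_graph V E \<Longrightarrow> {a, b} \<in> E \<Longrightarrow> a \<in> V \<and> b \<in> V \<and> a \<noteq> b"
  unfolding simple_graph_def by (fastforce simp: doubleton_eq_iff)

lemma simple_graph_edge_other_end:
  assumes "simple_graph V E" "e \<in> E" "u \<in> e"
  obtains w where "e = {u, w}" "w \<in> V" "w \<noteq> u"
  using assms unfolding simple_graph_def by (metis insert_commute insertE singletonD)

lemma leaf_edge_unique:
  assumes "is_leaf E u" "e \<in> E" "u \<in> e" "e' \<in> E" "u \<in> e'"
  shows "e = e'"
  using assms unfolding is_leaf_def degree_def
  by (metis (mono_tags, lifting) card_1_singletonE mem_Collect_eq singletonD)

lemma leaf_has_edge:
  assumes "is_leaf E u"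
  obtains e where "e \<in> E" "u \<in> e"
  using assms unfolding is_leaf_def degree_def
  by (metis (mono_tags, lifting) card_1_singletonE mem_Collect_eq singletonI)

lemma sym_adj_rel: "sym (adj_rel A)"
  by (auto simp: sym_def adj_rel_def insert_commute)

lemma adj_rel_rtrancl_sym: "(a, b) \<in> (adj_rel A)\<^sup>* \<Longrightarrow> (b, a) \<in> (adj_rel A)\<^sup>*"
  by (rule symD[OF sym_rtrancl[OF sym_adj_rel]])

lemma adj_rel_rtrancl_mono: "A \<subseteq> B \<Longrightarrow> (adj_rel A)\<^sup>* \<subseteq> (adj_rel B)\<^sup>*"
  by (rule rtrancl_mono) (auto simp: adj_rel_def)

lemma adj_rel_rtrancl_closed:
  assumes "(a, b) \<in> (adj_rel A)\<^sup>*" "a \<in> X" "\<And>p q. p \<in> X \<Longrightarrow> {p, q} \<in> A \<Longrightarrow> q \<in> X"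
  shows "b \<in> X"
  using assms(1,2) by (induction rule: rtrancl_induct) (auto simp: adj_rel_def intro: assms(3))

lemma adjacent_leaves_reach:
  assumes "is_leaf E u" "is_leaf E w" "{u, w} \<in> E" "(u, z) \<in> (adj_rel E)\<^sup>*"
  shows "z \<in> {u, w}"
  using assms(4)
proof (rule adj_rel_rtrancl_closed)
  fix p q assume "p \<in> {u, w}" "{p, q} \<in> E"
  moreover have "is_leaf E p" using \<open>p \<in> {u, w}\<close> assms(1,2) by blast
  ultimately have "{p, q} = {u, w}" using assms(3) leaf_edge_unique[of E p "{p, q}" "{u, w}"] by blast
  then show "q \<in> {u, w}" by blast
qed simp

lemma components_eq_blocks:
  assumes disjoint: "sorted_wrt (\<lambda>P Q. P \<inter> Q = {}) Ps"
    and cover: "\<Union>(set Ps) = V" and nonempty: "{} \<notin> set Ps"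
    and connected: "\<forall>P\<in>set Ps. P \<times> P \<subseteq> (adj_rel A)\<^sup>*"
    and edges: "\<forall>e\<in>A. \<exists>P\<in>set Ps. e \<subseteq> P"
  shows "components V A = set Ps"
proof -
  have component_eq: "component V A u = P" if P: "P \<in> set Ps" "u \<in> P" for P u
  proof
    have disjoint_Q: "Q \<inter> P = {}" if "Q \<in> set Ps" "Q \<noteq> P" for Q
      using disjoint that P(1) by (induction Ps) auto
    then have closed: "q \<in> P" if "p \<in> P" "{p, q} \<in> A" for p q
    proof -
      obtain Q where "Q \<in> set Ps" "{p, q} \<subseteq> Q" using edges \<open>{p, q} \<in> A\<close> by blast
      then show "q \<in> P" using \<open>p \<in> P\<close> disjoint_Q[of Q] by blast
    qed
    show "component V A u \<subseteq> P"
    proof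
      fix w assume "w \<in> component V A u"
      then have "(u, w) \<in> (adj_rel A)\<^sup>*" by (simp add: component_def)
      then show "w \<in> P" by (rule adj_rel_rtrancl_closed[OF _ P(2) closed])
    qed
    show "P \<subseteq> component V A u"
      using P cover connected by (auto simp: component_def)
  qed
  show ?thesis
    unfolding components_def
  proof
    show "component V A ` V \<subseteq> set Ps"
      using component_eq cover by blast
    show "set Ps \<subseteq> component V A ` V"
    proof
      fix P assume "P \<in> set Ps"
      moreover obtain u where "u \<in> P" using \<open>P \<in> set Ps\<close> nonempty by (metis equals0I)
      ultimately show "P \<in> component V A ` V" using component_eq cover by blast
    qed
  qed
qed

lemma sorted_wrt_disjoint_distinct:
  "sorted_wrt (\<lambda>P Q. P \<inter> Q = {}) Ps \<Longrightarrow> {} \<notin> set Ps \<Longrightarrow> distinct Ps"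
  by (induction Ps) auto

lemma Union_glue_Un: "\<Union>(set (glue (\<union>) Ps js)) = \<Union>(set Ps)"
  by (induction "(\<union>) :: 'a set \<Rightarrow> _" Ps js rule: glue.induct) (auto simp: Un_assoc)

lemma glue_Un_nonempty: "{} \<notin> set Ps \<Longrightarrow> {} \<notin> set (glue (\<union>) Ps js)"
  by (induction "(\<union>) :: 'a set \<Rightarrow> _" Ps js rule: glue.induct) auto

lemma glue_Un_disjoint:
  "sorted_wrt (\<lambda>P Q. P \<inter> Q = {}) Ps \<Longrightarrow> sorted_wrt (\<lambda>P Q. P \<inter> Q = {}) (glue (\<union>) Ps js)"
proof (induction "(\<union>) :: 'a set \<Rightarrow> _" Ps js rule: glue.induct)
  case (1 a b r js)
  then show ?case by (auto simp: Int_Un_distrib2)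
next
  case (2 a b r js)
  then show ?case using Union_glue_Un[of "b # r" js] by auto
qed simp_all

lemma map_card_glue_Un:
  "sorted_wrt (\<lambda>P Q. P \<inter> Q = {}) Ps \<Longrightarrow> \<forall>P\<in>set Ps. finite P \<Longrightarrow>
    map card (glue (\<union>) Ps js) = glue (+) (map card Ps) js"
proof (induction "(\<union>) :: 'a set \<Rightarrow> _" Ps js rule: glue.induct)
  case (1 a b r js)
  then show ?case by (auto simp: card_Un_disjoint Int_Un_distrib2)
qed simp_all

lemma glue_Un_superset: "P \<in> set Ps \<Longrightarrow> \<exists>Q\<in>set (glue (\<union>) Ps js). P \<subseteq> Q"
proof (induction "(\<union>) :: 'a set \<Rightarrow> _" Ps js arbitrary: P rule: glue.induct)
  case (1 a b r js)
  then consider "P \<subseteq> a \<union> b" | "P \<in> set r" by auto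
  then show ?case using "1.hyps"[of "a \<union> b"] "1.hyps"[of P] by cases auto
next
  case (2 a b r js)
  then show ?case by auto
qed auto

lemma glue_Un_joins_flagged:
  "Suc i < length Ps \<Longrightarrow> i < length js \<Longrightarrow> js ! i \<Longrightarrow>
    \<exists>Q\<in>set (glue (\<union>) Ps js). Ps ! i \<union> Ps ! Suc i \<subseteq> Q"
proof (induction "(\<union>) :: 'a set \<Rightarrow> _" Ps js arbitrary: i rule: glue.induct)
  case (1 a b r js)
  show ?case
  proof (cases i)
    case 0
    then show ?thesis using glue_Un_superset[of "a \<union> b" "(a \<union> b) # r" js] by simp
  next
    case (Suc k)
    with "1.prems" have "Suc k < length ((a \<union> b) # r)" "k < length js" "js ! k" by auto
    then obtain Q where "Q \<in> set (glue (\<union>) ((a \<union> b) # r) js)"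
      "((a \<union> b) # r) ! k \<union> ((a \<union> b) # r) ! Suc k \<subseteq> Q"
      using "1.hyps" by blast
    moreover have
      "(a # b # r) ! i \<union> (a # b # r) ! Suc i \<subseteq> ((a \<union> b) # r) ! k \<union> ((a \<union> b) # r) ! Suc k"
      using Suc by (cases k) auto
    ultimately show ?thesis by (simp only: glue.simps(1)) blast
  qed
next
  case (2 a b r js)
  then obtain k where k: "i = Suc k" by (cases i) auto
  with "2.prems" have "Suc k < length (b # r)" "k < length js" "js ! k" by auto
  then obtain Q where "Q \<in> set (glue (\<union>) (b # r) js)" "(b # r) ! k \<union> (b # r) ! Suc k \<subseteq> Q"
    using "2.hyps" by blast
  then show ?case using k by auto
qed simp_all

lemma glue_Un_connected:
  assumes "sym R" "trans R"
  shows "list_all2 (\<in>) reps Ps \<Longrightarrow> \<forall>P\<in>set Ps. P \<times> P \<subseteq> R \<Longrightarrow>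
    \<forall>(j, p, q) \<in> set (zip js (zip reps (tl reps))). j \<longrightarrow> (p, q) \<in> R \<Longrightarrow>
    \<forall>P\<in>set (glue (\<union>) Ps js). P \<times> P \<subseteq> R"
proof (induction "(\<union>) :: 'a set \<Rightarrow> _" Ps js arbitrary: reps rule: glue.induct)
  case (1 S T r js)
  then obtain p q reps'
    where reps: "reps = p # q # reps'" "p \<in> S" "q \<in> T" "list_all2 (\<in>) reps' r" by (auto simp: list_all2_Cons2)
  have "(p, q) \<in> R" using "1.prems"(3) reps by simp
  moreover have "S \<times> S \<subseteq> R" "T \<times> T \<subseteq> R" using "1.prems"(2) by auto
  ultimately have to_q: "(a, q) \<in> R" if "a \<in> S \<union> T" for a
    using that reps(2,3) transD[OF assms(2)] by blast
  have "(S \<union> T) \<times> (S \<union> T) \<subseteq> R"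
  proof clarify
    fix a b assume "a \<in> S \<union> T" "b \<in> S \<union> T"
    then show "(a, b) \<in> R" using to_q symD[OF assms(1)] transD[OF assms(2)] by blast
  qed
  then have "\<forall>P\<in>set (glue (\<union>) ((S \<union> T) # r) js). P \<times> P \<subseteq> R"
    using "1.prems"(2,3) reps by (intro "1.hyps"[of "q # reps'"]) auto
  then show ?case by simp
next
  case (2 S T r js)
  then obtain p q reps' where "reps = p # q # reps'" "q \<in> T" "list_all2 (\<in>) reps' r"
    by (auto simp: list_all2_Cons2)
  then have "\<forall>P\<in>set (glue (\<union>) (T # r) js). P \<times> P \<subseteq> R"
    using "2.prems"(2,3) by (intro "2.hyps"[of "q # reps'"]) auto
  then show ?case using "2.prems"(2) by simp
qed simp_all

section \<open>Caterpillars\<close>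

abbreviation leaf_star :: "'v set \<Rightarrow> 'v set set \<Rightarrow> 'v \<Rightarrow> 'v set" where
  "leaf_star V E v \<equiv> component V (leaf_edges V E) v"

definition flag_edges :: "'v set \<Rightarrow> 'v set set \<Rightarrow> 'v list \<Rightarrow> bool list \<Rightarrow> 'v set set" where
  "flag_edges V E vs js = leaf_edges V E \<union> {{vs ! i, vs ! Suc i} | i. Suc i < length vs \<and> js ! i}"

context
  fixes V :: "'v set" and E :: "'v set set" and vs :: "'v list"
  assumes tree: "is_tree V E" and spine: "is_spine V E vs"
begin

lemma internal_eq_spine: "internal V E = set vs"
  using spine by (simp add: is_spine_def)

lemma spine_vertex_in_V: "v \<in> set vs \<Longrightarrow> v \<in> V"
  using internal_eq_spine by (auto simp: internal_def)

lemma leaf_if_not_spine: "u \<in> V \<Longrightarrow> u \<notin> set vs \<Longrightarrow> is_leaf E u"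
  using internal_eq_spine by (auto simp: internal_def)

lemma spine_edges_eq: "{e \<in> E. e \<subseteq> set vs} = {{vs ! i, vs ! Suc i} | i. Suc i < length vs}"
  using spine unfolding is_spine_def by (elim conjE)

lemma mem_leaf_star: "v \<in> set vs \<Longrightarrow> v \<in> leaf_star V E v"
  using spine_vertex_in_V by (simp add: component_def)

lemma finite_leaf_star: "finite (leaf_star V E v)"
  using tree_simple_graph[OF tree] by (simp add: simple_graph_def component_def)

lemma leaf_star_subset:
  assumes v: "v \<in> set vs"
  shows "leaf_star V E v \<subseteq> insert v {u. is_leaf E u \<and> {u, v} \<in> E}"
proof
  fix w assume "w \<in> leaf_star V E v"
  then have "(v, w) \<in> (adj_rel (leaf_edges V E))\<^sup>*" by (simp add: component_def)
  then show "w \<in> insert v {u. is_leaf E u \<and> {u, v} \<in> E}"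
  proof (rule adj_rel_rtrancl_closed)
    fix p q
    assume p: "p \<in> insert v {u. is_leaf E u \<and> {u, v} \<in> E}" and pq: "{p, q} \<in> leaf_edges V E"
    then have pqE: "{p, q} \<in> E" and "\<not> {p, q} \<subseteq> set vs"
      using internal_eq_spine by (auto simp: leaf_edges_def)
    show "q \<in> insert v {u. is_leaf E u \<and> {u, v} \<in> E}"
    proof (cases "p = v")
      case True
      moreover have "q \<in> V" using simple_graph_edge_ends[OF tree_simple_graph[OF tree] pqE] by blast
      ultimately have "is_leaf E q"
        using \<open>\<not> {p, q} \<subseteq> set vs\<close> v leaf_if_not_spine by auto
      then show ?thesis using pqE True by (simp add: insert_commute)
    next
      case False
      with p have "is_leaf E p" "{p, v} \<in> E" by auto
      then have "{p, q} = {p, v}" using pqE leaf_edge_unique[of E p "{p, q}" "{p, v}"] by blast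
      then show ?thesis
        using simple_graph_edge_ends[OF tree_simple_graph[OF tree] pqE] by (auto simp: doubleton_eq_iff)
    qed
  qed simp
qed

lemma leaf_stars_disjoint:
  assumes v: "v \<in> set vs" and w: "w \<in> set vs" and "v \<noteq> w"
  shows "leaf_star V E v \<inter> leaf_star V E w = {}"
proof (rule ccontr)
  assume "leaf_star V E v \<inter> leaf_star V E w \<noteq> {}"
  then have "(v, w) \<in> (adj_rel (leaf_edges V E))\<^sup>*"
    by (auto simp: component_def intro: rtrancl_trans adj_rel_rtrancl_sym)
  then have "w \<in> leaf_star V E v" using spine_vertex_in_V[OF w] by (simp add: component_def)
  then show False
    using leaf_star_subset[OF v] \<open>v \<noteq> w\<close> w internal_eq_spine by (auto simp: internal_def)
qed

lemma leaf_stars_cover: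
  assumes u: "u \<in> V"
  shows "\<exists>v\<in>set vs. u \<in> leaf_star V E v"
proof (cases "u \<in> set vs")
  case True
  then show ?thesis using mem_leaf_star by blast
next
  case False
  \<comment> \<open>if the neighbour of the leaf \<open>u\<close> were a leaf too, \<open>{u, w}\<close> would be a whole component\<close>
  then have leaf: "is_leaf E u" using leaf_if_not_spine u by blast
  then obtain e where "e \<in> E" "u \<in> e" by (rule leaf_has_edge)
  then obtain w where e: "e = {u, w}" "w \<in> V" and eE: "{u, w} \<in> E"
    using simple_graph_edge_other_end[OF tree_simple_graph[OF tree]] by metis
  show ?thesis
  proof (cases "w \<in> set vs")
    case True
    have "{w, u} \<in> leaf_edges V E"
      using eE False internal_eq_spine by (auto simp: leaf_edges_def insert_commute)
    then have "u \<in> leaf_star V E w" using u by (auto simp: component_def adj_rel_def)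
    then show ?thesis using True by blast
  next
    case False
    have "2 \<le> length vs" using spine by (simp add: is_spine_def)
    then have "vs ! 0 \<in> set vs" by (intro nth_mem) linarith
    moreover have "(u, vs ! 0) \<in> (adj_rel E)\<^sup>*"
      using tree u spine_vertex_in_V[OF \<open>vs ! 0 \<in> set vs\<close>]
      by (simp add: is_tree_def connected_graph_def)
    then have "vs ! 0 \<in> {u, w}"
      by (rule adjacent_leaves_reach[OF leaf leaf_if_not_spine[OF e(2) False] eE])
    ultimately show ?thesis using \<open>u \<notin> set vs\<close> False by auto
  qed
qed

lemma leaf_edge_in_leaf_star:
  assumes e: "e \<in> leaf_edges V E"
  shows "\<exists>v\<in>set vs. e \<subseteq> leaf_star V E v"
proof -
  obtain a b where ab: "e = {a, b}" "a \<in> V" "b \<in> V"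
    using e tree_simple_graph[OF tree] unfolding leaf_edges_def simple_graph_def by blast
  obtain v where v: "v \<in> set vs" "a \<in> leaf_star V E v" using leaf_stars_cover[OF ab(2)] by blast
  have "(a, b) \<in> adj_rel (leaf_edges V E)" using e ab by (simp add: adj_rel_def)
  then have "b \<in> leaf_star V E v" using v ab by (auto simp: component_def)
  then show ?thesis using v ab by auto
qed

lemma spine_edge_in_E: "Suc i < length vs \<Longrightarrow> {vs ! i, vs ! Suc i} \<in> E"
  using spine_edges_eq by blast

lemma spine_edge_not_leaf_edge: "Suc i < length vs \<Longrightarrow> {vs ! i, vs ! Suc i} \<notin> leaf_edges V E"
  using internal_eq_spine by (simp add: leaf_edges_def)

lemma spine_edge_inj:
  assumes "Suc i < length vs" "Suc j < length vs" "{vs ! i, vs ! Suc i} = {vs ! j, vs ! Suc j}"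
  shows "i = j"
proof -
  have "distinct vs" using spine by (simp add: is_spine_def)
  then have "vs ! k = vs ! l \<longleftrightarrow> k = l" if "k < length vs" "l < length vs" for k l
    using that nth_eq_iff_index_eq by blast
  then show ?thesis using assms by (auto simp: doubleton_eq_iff)
qed

lemma spine_or_leaf_edge:
  "e \<in> E \<Longrightarrow> e \<in> leaf_edges V E \<or> (\<exists>i. Suc i < length vs \<and> e = {vs ! i, vs ! Suc i})"
proof (cases "e \<subseteq> set vs")
  case True
  assume "e \<in> E"
  with True have "e \<in> {e \<in> E. e \<subseteq> set vs}" by blast
  then show ?thesis unfolding spine_edges_eq by blast
qed (auto simp: leaf_edges_def internal_eq_spine)

lemma spine_edge_in_flag_edges_iff:
  "Suc i < length vs \<Longrightarrow> {vs ! i, vs ! Suc i} \<in> flag_edges V E vs js \<longleftrightarrow> js ! i"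
  using spine_edge_not_leaf_edge spine_edge_inj by (auto simp: flag_edges_def)

lemma subsets_eq_flag_edges:
  "{A. A \<subseteq> E \<and> leaf_edges V E \<subseteq> A} = flag_edges V E vs ` {js. length js = length vs - 1}"
proof (intro equalityI subsetI)
  fix A assume A: "A \<in> {A. A \<subseteq> E \<and> leaf_edges V E \<subseteq> A}"
  define js where "js = map (\<lambda>i. {vs ! i, vs ! Suc i} \<in> A) [0..<length vs - 1]"
  have "flag_edges V E vs js \<subseteq> E"
    using spine_edge_in_E by (auto simp: flag_edges_def leaf_edges_def)
  moreover have "e \<in> A \<longleftrightarrow> e \<in> flag_edges V E vs js" if "e \<in> E" for e
    using spine_or_leaf_edge[OF that] A spine_edge_in_flag_edges_iff
    by (auto simp: js_def flag_edges_def)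
  ultimately have "A = flag_edges V E vs js" using A by blast
  then show "A \<in> flag_edges V E vs ` {js. length js = length vs - 1}" by (simp add: js_def)
next
  fix A assume "A \<in> flag_edges V E vs ` {js. length js = length vs - 1}"
  then show "A \<in> {A. A \<subseteq> E \<and> leaf_edges V E \<subseteq> A}"
    using spine_edge_in_E by (auto simp: flag_edges_def leaf_edges_def)
qed

lemma inj_on_flag_edges: "inj_on (flag_edges V E vs) {js. length js = length vs - 1}"
proof (rule inj_onI)
  fix js js' assume "js \<in> {js. length js = length vs - 1}" "js' \<in> {js. length js = length vs - 1}"
    and "flag_edges V E vs js = flag_edges V E vs js'"
  then show "js = js'"
  proof (intro nth_equalityI)
    fix i assume "i < length js"
    with \<open>js \<in> _\<close> have "Suc i < length vs" by simp
    then show "js ! i = js' ! i"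
      using spine_edge_in_flag_edges_iff \<open>flag_edges V E vs js = _\<close> by metis
  qed simp
qed

lemma leaf_stars_sorted_disjoint: "sorted_wrt (\<lambda>P Q. P \<inter> Q = {}) (map (leaf_star V E) vs)"
proof -
  have "distinct vs" using spine by (simp add: is_spine_def)
  then show ?thesis
    using leaf_stars_disjoint by (auto simp: sorted_wrt_iff_nth_less nth_eq_iff_index_eq)
qed

lemma glued_leaf_stars_connected:
  "\<forall>P\<in>set (glue (\<union>) (map (leaf_star V E) vs) js).
    P \<times> P \<subseteq> (adj_rel (flag_edges V E vs js))\<^sup>*"
proof -
  let ?R = "(adj_rel (flag_edges V E vs js))\<^sup>*"
  have "leaf_edges V E \<subseteq> flag_edges V E vs js" by (simp add: flag_edges_def)
  then have "(v, a) \<in> ?R" if "a \<in> leaf_star V E v" for v a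
    using that adj_rel_rtrancl_mono by (auto simp: component_def)
  then have "\<forall>P\<in>set (map (leaf_star V E) vs). P \<times> P \<subseteq> ?R"
    by (auto intro: rtrancl_trans[OF adj_rel_rtrancl_sym])
  moreover have "list_all2 (\<in>) vs (map (leaf_star V E) vs)"
    using mem_leaf_star by (simp add: list_all2_conv_all_nth)
  moreover have "(vs ! i, vs ! Suc i) \<in> ?R" if "Suc i < length vs" "js ! i" for i
    using that spine_edge_in_flag_edges_iff by (auto simp: adj_rel_def)
  then have "\<forall>(j, p, q) \<in> set (zip js (zip vs (tl vs))). j \<longrightarrow> (p, q) \<in> ?R"
    by (auto simp: set_zip nth_tl)
  ultimately show ?thesis
    by (intro glue_Un_connected[OF sym_rtrancl[OF sym_adj_rel] trans_rtrancl]) auto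
qed

lemma flag_edge_in_glued_leaf_star:
  assumes js: "length js = length vs - 1" and e: "e \<in> flag_edges V E vs js"
  shows "\<exists>P\<in>set (glue (\<union>) (map (leaf_star V E) vs) js). e \<subseteq> P"
proof -
  let ?Ss = "map (leaf_star V E) vs"
  consider "e \<in> leaf_edges V E" | i where "Suc i < length vs" "js ! i" "e = {vs ! i, vs ! Suc i}"
    using e unfolding flag_edges_def by blast
  then show ?thesis
  proof cases
    case 1
    then obtain v where "v \<in> set vs" "e \<subseteq> leaf_star V E v" using leaf_edge_in_leaf_star by blast
    moreover obtain Q where "Q \<in> set (glue (\<union>) ?Ss js)" "leaf_star V E v \<subseteq> Q"
      using glue_Un_superset[of "leaf_star V E v" ?Ss js] \<open>v \<in> set vs\<close> by auto
    ultimately show ?thesis by blast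
  next
    case (2 i)
    then have "e \<subseteq> ?Ss ! i \<union> ?Ss ! Suc i" using mem_leaf_star by auto
    moreover have "\<exists>Q\<in>set (glue (\<union>) ?Ss js). ?Ss ! i \<union> ?Ss ! Suc i \<subseteq> Q"
      using 2 js by (intro glue_Un_joins_flagged) auto
    ultimately show ?thesis by blast
  qed
qed

lemma components_flag_edges:
  assumes "length js = length vs - 1"
  shows "components V (flag_edges V E vs js) = set (glue (\<union>) (map (leaf_star V E) vs) js)"
proof (rule components_eq_blocks)
  show "sorted_wrt (\<lambda>P Q. P \<inter> Q = {}) (glue (\<union>) (map (leaf_star V E) vs) js)"
    by (rule glue_Un_disjoint[OF leaf_stars_sorted_disjoint])
  show "\<Union>(set (glue (\<union>) (map (leaf_star V E) vs) js)) = V"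
    unfolding Union_glue_Un using leaf_stars_cover by (auto simp: component_def)
  show "{} \<notin> set (glue (\<union>) (map (leaf_star V E) vs) js)"
    by (rule glue_Un_nonempty) (use mem_leaf_star in auto)
qed (use glued_leaf_stars_connected flag_edge_in_glued_leaf_star[OF assms] in auto)

lemma partition_of_flag_edges:
  assumes "length js = length vs - 1"
  shows "partition_of V (flag_edges V E vs js) =
    mset (glue (+) (map (\<lambda>v. card (leaf_star V E v)) vs) js)"
proof -
  let ?Ps = "glue (\<union>) (map (leaf_star V E) vs) js"
  have "distinct ?Ps"
    using glue_Un_disjoint[OF leaf_stars_sorted_disjoint]
      glue_Un_nonempty[of "map (leaf_star V E) vs"] mem_leaf_star sorted_wrt_disjoint_distinct
    by fastforce
  then have "partition_of V (flag_edges V E vs js) = mset (map card ?Ps)"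
    by (simp add: partition_of_def components_flag_edges[OF assms] mset_set_set)
  then show ?thesis
    using map_card_glue_Un[OF leaf_stars_sorted_disjoint] finite_leaf_star by (simp add: comp_def)
qed

end

theorem proposition2p3:
  fixes V :: "'v set" and E :: "'v set set" and \<beta> :: "nat list"
    and x :: "nat \<Rightarrow> 'a::comm_ring_1"
  assumes "proper_caterpillar V E"
    and "\<beta> \<in> Phi V E"
  shows "U_L V E x = L_poly \<beta> x"
proof -
  have tree: "is_tree V E" using assms(1) by (simp add: proper_caterpillar_def caterpillar_def)
  obtain vs where spine: "is_spine V E vs" and \<beta>: "\<beta> = map (\<lambda>v. card (leaf_star V E v)) vs"
    using assms(2) by (auto simp: Phi_def)
  have "0 < card (leaf_star V E v)" if "v \<in> set vs" for v
    using mem_leaf_star[OF tree spine that] finite_leaf_star[OF tree spine] card_gt_0_iff by blast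
  moreover have "vs \<noteq> []" using spine by (auto simp: is_spine_def)
  ultimately have "composition \<beta>" by (auto simp: \<beta> composition_def)
  have "U_L V E x =
      (\<Sum>A \<in> flag_edges V E vs ` {js. length js = length vs - 1}. xmon x (partition_of V A))"
    by (simp add: U_L_def subsets_eq_flag_edges[OF tree spine])
  also have "\<dots> = (\<Sum>js | length js = length vs - 1. xmon x (partition_of V (flag_edges V E vs js)))"
    by (rule sum.reindex[OF inj_on_flag_edges[OF tree spine], unfolded comp_def])
  also have "\<dots> = (\<Sum>js | length js = length \<beta> - 1. xmon x (mset (glue (+) \<beta> js)))"
    using partition_of_flag_edges[OF tree spine] \<beta> by simp
  also have "\<dots> = L_poly \<beta> x"
    by (rule L_poly_eq_sum_flags[OF \<open>composition \<beta>\<close>, symmetric])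
  finally show ?thesis .
qed

end
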